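(* Let $k\ge 3$ be an integer such that every set of $k-1$ distinct positive integers has the LR property. Let $\{v_1,\ldots,v_k\}$ be a set of $k$ distinct positive integers with $\gcd(v_1,\ldots,v_k)=1$ but $\gcd(v_1,\ldots,v_{k-1})\neq 1$. Then $\{v_1,\ldots,v_k\}$ has the LR property.
   Context: For a real number $x$, $\|x\|$ denotes the distance from $x$ to the nearest integer. A finite set $S$ of $m$ integers has the LR (lonely runner) property if there exists a real $t$ such that $\|tv\|\ge \frac{1}{m+1}$ for all $v\in S$. The hypothesis "every set of $k-1$ distinct positive integers has the LR property" is what the paper calls "the lonely runner conjecture holds for $k-1$". *)

theory Defs
  imports Complex_Main
begin

definition dist_nint :: "real \<Rightarrow> real" where
  "dist_nint x = (INF n::int. \<bar>x - of_int n\<bar>)"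

definition LR_property :: "int set \<Rightarrow> bool" where
  "LR_property S \<longleftrightarrow> (\<exists>t::real. \<forall>v\<in>S. dist_nint (t * of_int v) \<ge> 1 / (real (card S) + 1))"

end

theory Submission
  imports Defs
begin

text \<open>Let d >= 2 be the gcd of v_1, ..., v_(k-1), so that v_k is coprime to d.
  Take t witnessing the LR property of the k - 1 quotients v_i / d and put s = (t + j) / d
  for an integer j. For i < k the product s v_i differs from t v_i / d by an integer, so
  the bound 1/k >= 1/(k+1) persists whatever j is. Since j v_k runs through all residues
  modulo d, the fractional part of s v_k can be moved by any multiple of 1/d <= 1/2, in
  particular into [1/4, 3/4), and 1/4 >= 1/(k+1) because k >= 3.\<close>

lemma dist_nint_le: "dist_nint x \<le> \<bar>x - of_int n\<bar>"
  unfolding dist_nint_def by (rule cINF_lower) (auto intro: bdd_belowI[where m = 0])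

lemma dist_nint_ge_iff: "c \<le> dist_nint x \<longleftrightarrow> (\<forall>n::int. c \<le> \<bar>x - of_int n\<bar>)"
  using dist_nint_le order_trans unfolding dist_nint_def by (blast intro: cINF_greatest)

lemma dist_nint_add_int [simp]: "dist_nint (x + of_int m) = dist_nint x"
proof (rule antisym)
  have "\<bar>x + of_int m - of_int n\<bar> = \<bar>x - of_int (n - m)\<bar>" for n
    by simp
  then show "dist_nint x \<le> dist_nint (x + of_int m)"
    unfolding dist_nint_ge_iff by (metis dist_nint_le)
  have "\<bar>x - of_int n\<bar> = \<bar>x + of_int m - of_int (n + m)\<bar>" for n
    by simp
  then show "dist_nint (x + of_int m) \<le> dist_nint x"
    unfolding dist_nint_ge_iff by (metis dist_nint_le)
qed

lemma dist_nint_ge_quarter: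
  assumes "1/4 \<le> x" "x < 3/4"
  shows "1/4 \<le> dist_nint x"
  unfolding dist_nint_ge_iff
proof
  fix n :: int
  have "real_of_int n \<le> 0 \<or> real_of_int n \<ge> 1" by (cases "n \<le> 0") auto
  then show "1/4 \<le> \<bar>x - of_int n\<bar>" using assms by linarith
qed

lemma exists_shift_dist_nint_ge_quarter:
  fixes d :: int
  assumes "d \<ge> 2"
  shows "\<exists>m::int. 1/4 \<le> dist_nint (x + of_int m / of_int d)"
proof
  define m where "m = \<lceil>of_int d * (1/4 - x)\<rceil>"
  have d: "real_of_int d \<ge> 2" using assms by simp
  have "of_int d * (1/4 - x) \<le> of_int m" "of_int m < of_int d * (1/4 - x) + 1"
    unfolding m_def by linarith+
  with d have "1/4 - x \<le> of_int m / of_int d" "of_int m / of_int d < 1/4 - x + 1 / of_int d"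
    by (simp_all add: field_simps)
  moreover have "1 / real_of_int d \<le> 1/2" using d by (simp add: field_simps)
  ultimately show "1/4 \<le> dist_nint (x + of_int m / of_int d)"
    by (intro dist_nint_ge_quarter) linarith+
qed

lemma exists_mult_coprime_eq_mod:
  fixes u d m :: int
  assumes "coprime u d"
  shows "\<exists>j n. j * u = m + n * d"
proof -
  obtain a b where "a * u + b * d = 1"
    using bezout_int[of u d] assms by (auto simp: coprime_iff_gcd_eq_1)
  moreover have "(m * a) * u = m * (a * u + b * d) + (- m * b) * d"
    by (simp add: algebra_simps)
  ultimately have "(m * a) * u = m + (- m * b) * d" by simp
  then show ?thesis by blast
qed

lemma dist_nint_shift_mult_dvd:
  fixes d x j :: int
  assumes "d dvd x" "d \<noteq> 0"
  shows "dist_nint ((t + of_int j) / of_int d * of_int x) = dist_nint (t * of_int (x div d))"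
proof -
  have "(t + of_int j) / of_int d * of_int x = t * of_int (x div d) + of_int (j * (x div d))"
    using assms by (auto simp: field_simps elim!: dvdE)
  then show ?thesis by (metis dist_nint_add_int)
qed

lemma card_image_div_dvd:
  fixes d :: int
  assumes "\<forall>x\<in>S. d dvd x" "d \<noteq> 0"
  shows "card ((\<lambda>x. x div d) ` S) = card S"
  using assms by (intro card_image inj_onI) (metis dvd_div_mult_self)

lemma Gcd_int_ge_two:
  fixes A :: "int set"
  assumes "x \<in> A" "x \<noteq> 0" "Gcd A \<noteq> 1"
  shows "Gcd A \<ge> 2"
proof -
  have "Gcd A \<noteq> 0" using assms(1,2) by (auto simp: Gcd_0_iff)
  then show ?thesis using assms(3) Gcd_int_greater_eq_0[of A] by linarith
qed

lemma LR_property_insert_coprime: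
  fixes S :: "int set" and u d :: int
  assumes "finite S" "card S \<ge> 2" "u \<notin> S"
    and "d \<ge> 2" "\<forall>x\<in>S. d dvd x" "coprime u d"
    and LR: "LR_property ((\<lambda>x. x div d) ` S)"
  shows "LR_property (insert u S)"
proof -
  let ?m = "real (card S)"
  have card_div: "card ((\<lambda>x. x div d) ` S) = card S"
    using assms(4,5) by (intro card_image_div_dvd) auto
  obtain t where t: "\<forall>x\<in>S. 1 / (?m + 1) \<le> dist_nint (t * of_int (x div d))"
    using LR unfolding LR_property_def card_div by auto
  obtain r where r: "1/4 \<le> dist_nint (t * of_int u / of_int d + of_int r / of_int d)"
    using exists_shift_dist_nint_ge_quarter assms(4) by blast
  obtain j n where jn: "j * u = r + n * d"
    using exists_mult_coprime_eq_mod assms(6) by blast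
  define s where "s = (t + of_int j) / of_int d"
  have d: "real_of_int d \<noteq> 0" using assms(4) by simp
  have "s * of_int u = t * of_int u / of_int d + of_int r / of_int d + of_int n"
    using arg_cong[OF jn, of real_of_int] d unfolding s_def by (simp add: field_simps)
  then have "1/4 \<le> dist_nint (s * of_int u)"
    using r by simp
  moreover have "1 / (?m + 2) \<le> 1/4" "1 / (?m + 2) \<le> 1 / (?m + 1)"
    using assms(2) by (simp_all add: frac_le)
  moreover have "dist_nint (s * of_int x) = dist_nint (t * of_int (x div d))" if "x \<in> S" for x
    unfolding s_def using assms(4,5) that by (intro dist_nint_shift_mult_dvd) auto
  ultimately have "\<forall>x\<in>insert u S. 1 / (?m + 2) \<le> dist_nint (s * of_int x)"
    using t by (metis insert_iff order_trans)
  then show ?thesis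
    unfolding LR_property_def using assms(1,3) by (auto simp: add.commute)
qed

theorem lemma4:
  fixes k :: nat and v :: "nat \<Rightarrow> int"
  assumes "k \<ge> 3"
    and LR_km1: "\<forall>S::int set. finite S \<and> card S = k - 1 \<and> (\<forall>x\<in>S. x > 0) \<longrightarrow> LR_property S"
    and pos: "\<forall>i\<in>{1..k}. v i > 0"
    and dist: "inj_on v {1..k}"
    and gcd_all: "Gcd (v ` {1..k}) = 1"
    and gcd_part: "Gcd (v ` {1..k-1}) \<noteq> 1"
  shows "LR_property (v ` {1..k})"
proof -
  define S where "S = v ` {1..k-1}"
  define d where "d = Gcd S"
  have split: "{1..k} = insert k {1..k-1}" using assms(1) by auto
  have S_pos: "\<forall>x\<in>S. x > 0" and S_dvd: "\<forall>x\<in>S. d dvd x"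
    using pos unfolding S_def d_def by auto
  have card_S: "card S = k - 1"
    unfolding S_def using dist split by (simp add: card_image inj_on_insert)
  have "d \<ge> 2"
    using pos gcd_part assms(1) unfolding d_def S_def by (intro Gcd_int_ge_two[of "v 1"]) force+
  moreover have "coprime (v k) d" "v k \<notin> S"
    using gcd_all dist split unfolding d_def S_def by (auto simp: coprime_iff_gcd_eq_1)
  moreover have "LR_property ((\<lambda>x. x div d) ` S)"
  proof (rule LR_km1[rule_format], intro conjI)
    show "finite ((\<lambda>x. x div d) ` S)" unfolding S_def by simp
    show "card ((\<lambda>x. x div d) ` S) = k - 1"
      using card_image_div_dvd[of S d] S_dvd \<open>d \<ge> 2\<close> card_S by simp
    show "\<forall>y\<in>(\<lambda>x. x div d) ` S. y > 0"
      using S_pos S_dvd \<open>d \<ge> 2\<close> by (auto simp: pos_imp_zdiv_pos_iff zdvd_imp_le)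
  qed
  ultimately have "LR_property (insert (v k) S)"
    using card_S S_dvd assms(1) by (intro LR_property_insert_coprime) (auto simp: S_def)
  then show ?thesis unfolding split S_def by simp
qed

end
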